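(* If there exists a $1$-perfect code in $H(q+1,q)$, then the vertex set of $H(q,q)$ can be partitioned into distance-$2$ MDS codes $M^0,\dots,M^{q-1}$ such that each $M^i$ is a union of $q$ pairwise disjoint distance-$3$ MDS codes.
   Context: The Hamming graph $H(n,q)$ has vertex set $\mathbb{Z}_q^n$ with the Hamming distance $d$ (number of differing coordinates); vertices at distance $1$ are adjacent. A distance-$d$ MDS code in $H(n,q)$ is a set of $q^{n-d+1}$ vertices with pairwise Hamming distance at least $d$. A $1$-perfect code in $H(n,q)$ is a set $C$ of vertices such that every ball $\{y: d(x,y)\le1\}$ contains exactly one element of $C$. *)

theory Defs
  imports Main
begin

text \<open>Vertices of the Hamming graph H(n,q): words of length n over {0..q-1},
  represented as functions nat => nat that vanish outside {0..n-1}.\<close>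
definition hvert :: "nat \<Rightarrow> nat \<Rightarrow> (nat \<Rightarrow> nat) set" where
  "hvert n q = {x. (\<forall>i<n. x i < q) \<and> (\<forall>i\<ge>n. x i = 0)}"

definition hdist :: "nat \<Rightarrow> (nat \<Rightarrow> nat) \<Rightarrow> (nat \<Rightarrow> nat) \<Rightarrow> nat" where
  "hdist n x y = card {i. i < n \<and> x i \<noteq> y i}"

definition mds_code :: "nat \<Rightarrow> nat \<Rightarrow> nat \<Rightarrow> (nat \<Rightarrow> nat) set \<Rightarrow> bool" where
  "mds_code n q d C \<longleftrightarrow> C \<subseteq> hvert n q \<and> finite C \<and> card C = q ^ (n + 1 - d)
     \<and> (\<forall>x\<in>C. \<forall>y\<in>C. x \<noteq> y \<longrightarrow> hdist n x y \<ge> d)"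

definition perfect1_code :: "nat \<Rightarrow> nat \<Rightarrow> (nat \<Rightarrow> nat) set \<Rightarrow> bool" where
  "perfect1_code n q C \<longleftrightarrow> C \<subseteq> hvert n q \<and>
     (\<forall>x\<in>hvert n q. \<exists>!c. c \<in> C \<and> hdist n x c \<le> 1)"

end

theory Submission
  imports Defs "HOL-Library.FuncSet" "HOL-Number_Theory.Cong"
begin

text \<open>Puncturing a 1-perfect code of H(q+1,q) at its last coordinate and sorting the
  codewords by the value of that coordinate gives q codes of minimum distance 3 in H(q,q).
  The sphere-packing bound makes the perfect code so large that, by the Singleton bound,
  each of these q codes is MDS, and their union is a distance-2 MDS code M.  Adding a
  constant modulo q to one coordinate is an isometry; the q translates of M along a
  coordinate are pairwise disjoint, since two words of M cannot differ in exactly that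
  coordinate, so by counting they partition the vertex set.\<close>

subsection \<open>Words and Hamming distance\<close>

lemma hvert_bij_PiE: "bij_betw (\<lambda>x. restrict x {..<n}) (hvert n q) (PiE {..<n} (\<lambda>_. {..<q}))"
proof (rule bij_betw_imageI)
  show "inj_on (\<lambda>x. restrict x {..<n}) (hvert n q)"
  proof (rule inj_onI)
    fix x y assume xy: "x \<in> hvert n q" "y \<in> hvert n q"
      and e: "restrict x {..<n} = restrict y {..<n}"
    have "x i = y i" for i
      using fun_cong[OF e, of i] xy by (cases "i < n") (auto simp: hvert_def)
    then show "x = y" ..
  qed
  show "(\<lambda>x. restrict x {..<n}) ` hvert n q = PiE {..<n} (\<lambda>_. {..<q})"
  proof
    show "(\<lambda>x. restrict x {..<n}) ` hvert n q \<subseteq> PiE {..<n} (\<lambda>_. {..<q})"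
      by (auto simp: hvert_def PiE_iff split: if_splits)
    show "PiE {..<n} (\<lambda>_. {..<q}) \<subseteq> (\<lambda>x. restrict x {..<n}) ` hvert n q"
    proof
      fix f assume f: "f \<in> PiE {..<n} (\<lambda>_. {..<q})"
      have "(\<lambda>i. if i < n then f i else 0) \<in> hvert n q"
        using f by (auto simp: hvert_def)
      moreover have "f = restrict (\<lambda>i. if i < n then f i else 0) {..<n}"
        using f by (auto simp: PiE_def extensional_def)
      ultimately show "f \<in> (\<lambda>x. restrict x {..<n}) ` hvert n q" by blast
    qed
  qed
qed

lemma finite_hvert: "finite (hvert n q)"
  using bij_betw_finite[OF hvert_bij_PiE] by (simp add: finite_PiE)

lemma card_hvert: "card (hvert n q) = q ^ n"
  using bij_betw_same_card[OF hvert_bij_PiE] by (simp add: card_PiE)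

lemma hdist_sym: "hdist n x y = hdist n y x"
  unfolding hdist_def by (simp add: eq_commute)

lemma hdist_self [simp]: "hdist n x x = 0"
  by (simp add: hdist_def)

lemma hdist_eq_0_iff:
  assumes "x \<in> hvert n q" "y \<in> hvert n q"
  shows "hdist n x y = 0 \<longleftrightarrow> x = y"
proof
  assume "hdist n x y = 0"
  then have agree: "{i. i < n \<and> x i \<noteq> y i} = {}"
    by (simp add: hdist_def)
  have "x i = y i" for i
    using agree assms by (cases "i < n") (auto simp: hvert_def)
  then show "x = y" ..
qed simp

lemma hdist_le_card:
  assumes "\<And>i. i < n \<Longrightarrow> x i \<noteq> y i \<Longrightarrow> i \<in> D" "finite D"
  shows "hdist n x y \<le> card D"
  unfolding hdist_def using assms by (intro card_mono) auto

lemma hdist_fun_upd_le: "hdist n x (x(i := a)) \<le> 1"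
  using hdist_le_card[of n x "x(i := a)" "{i}"] by (simp split: if_splits)

lemma hdist_Suc_fun_upd:
  "hdist (Suc n) (x(n := a)) (y(n := b)) = hdist n x y + (if a = b then 0 else 1)"
proof -
  have "{i. i < Suc n \<and> (x(n := a)) i \<noteq> (y(n := b)) i} =
        {i. i < n \<and> x i \<noteq> y i} \<union> (if a = b then {} else {n})"
    by (auto simp: less_Suc_eq)
  then show ?thesis
    unfolding hdist_def by (simp add: card_Un_disjoint)
qed

lemma hdist_eq_1_imp_fun_upd:
  assumes "x \<in> hvert n q" "c \<in> hvert n q" "hdist n x c = 1"
  obtains i where "i < n" "x i < q" "x i \<noteq> c i" "x = c(i := x i)"
proof -
  obtain i where D: "{j. j < n \<and> x j \<noteq> c j} = {i}"
    using assms(3) card_1_singletonE unfolding hdist_def by blast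
  have "x j = (c(i := x i)) j" for j
    using D assms(1,2) by (cases "j < n") (auto simp: hvert_def)
  then have "x = c(i := x i)" ..
  with that D assms(1) show thesis by (auto simp: hvert_def)
qed

subsection \<open>Codes and the Singleton bound\<close>

definition hcode :: "nat \<Rightarrow> nat \<Rightarrow> nat \<Rightarrow> (nat \<Rightarrow> nat) set \<Rightarrow> bool" where
  "hcode n q d C \<longleftrightarrow> C \<subseteq> hvert n q \<and> (\<forall>x\<in>C. \<forall>y\<in>C. x \<noteq> y \<longrightarrow> d \<le> hdist n x y)"

lemma mds_code_iff_hcode: "mds_code n q d C \<longleftrightarrow> hcode n q d C \<and> card C = q ^ (n + 1 - d)"
  unfolding mds_code_def hcode_def using finite_subset[OF _ finite_hvert] by blast

lemma hcode_mono: "hcode n q d C \<Longrightarrow> d' \<le> d \<Longrightarrow> hcode n q d' C"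
  unfolding hcode_def by (meson le_trans)

lemma hcode_card_le:
  assumes C: "hcode n q d C" and d: "1 \<le> d"
  shows "card C \<le> q ^ (n + 1 - d)"
proof -
  define m where "m = n + 1 - d"
  define pr where "pr x = (\<lambda>i. if i < m then x i else (0::nat))" for x :: "nat \<Rightarrow> nat"
  have "inj_on pr C"
  proof (rule inj_onI)
    fix x y assume x: "x \<in> C" and y: "y \<in> C" and "pr x = pr y"
    then have "\<And>i. i < n \<Longrightarrow> x i \<noteq> y i \<Longrightarrow> i \<in> {m..<n}"
      unfolding pr_def by (metis atLeastLessThan_iff not_less)
    then have "hdist n x y \<le> n - m"
      using hdist_le_card[of n x y "{m..<n}"] by simp
    also have "\<dots> < d" using d by (simp add: m_def)
    finally show "x = y" using C x y unfolding hcode_def by (meson not_le)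
  qed
  moreover have "pr ` C \<subseteq> hvert m q"
    using C d by (auto simp: hcode_def hvert_def pr_def m_def)
  ultimately have "card C \<le> card (hvert m q)"
    using card_inj_on_le[OF _ _ finite_hvert] by blast
  then show ?thesis by (simp add: card_hvert m_def)
qed

subsection \<open>Perfect codes\<close>

lemma card_hball_le:
  assumes c: "c \<in> hvert n q"
  shows "card {x \<in> hvert n q. hdist n x c \<le> 1} \<le> 1 + n * (q - 1)"
proof -
  let ?U = "\<Union>i<n. (\<lambda>a. c(i := a)) ` ({..<q} - {c i})"
  have "{x \<in> hvert n q. hdist n x c \<le> 1} \<subseteq> insert c ?U"
  proof
    fix x assume x: "x \<in> {x \<in> hvert n q. hdist n x c \<le> 1}"
    show "x \<in> insert c ?U"
    proof (cases "hdist n x c = 0")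
      case True then show ?thesis using hdist_eq_0_iff c x by auto
    next
      case False
      then have "hdist n x c = 1" using x by auto
      then obtain i where "i < n" "x i < q" "x i \<noteq> c i" "x = c(i := x i)"
        using hdist_eq_1_imp_fun_upd c x by blast
      then show ?thesis by blast
    qed
  qed
  then have "card {x \<in> hvert n q. hdist n x c \<le> 1} \<le> card (insert c ?U)"
    by (intro card_mono) auto
  also have "\<dots> \<le> Suc (card ?U)"
    by (simp add: card_insert_if)
  also have "card ?U \<le> (\<Sum>i<n. card ((\<lambda>a. c(i := a)) ` ({..<q} - {c i})))"
    by (rule card_UN_le) simp
  also have "\<dots> \<le> (\<Sum>i<n. q - 1)"
  proof (rule sum_mono)
    fix i assume "i \<in> {..<n}"
    then have "card ({..<q} - {c i}) = q - 1" using c by (simp add: hvert_def)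
    then show "card ((\<lambda>a. c(i := a)) ` ({..<q} - {c i})) \<le> q - 1"
      by (metis card_image_le finite_Diff finite_lessThan)
  qed
  finally show ?thesis by simp
qed

lemma perfect1_code_hcode:
  assumes P: "perfect1_code n q C"
  shows "hcode n q 3 C"
  unfolding hcode_def
proof (intro conjI ballI impI)
  show "C \<subseteq> hvert n q" using P by (simp add: perfect1_code_def)
  fix c1 c2 assume c: "c1 \<in> C" "c2 \<in> C" "c1 \<noteq> c2"
  have v: "c1 \<in> hvert n q" "c2 \<in> hvert n q" using P c by (auto simp: perfect1_code_def)
  have uniq: "\<And>y. y \<in> hvert n q \<Longrightarrow> \<exists>!c. c \<in> C \<and> hdist n y c \<le> 1"
    using P by (simp add: perfect1_code_def)
  show "3 \<le> hdist n c1 c2"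
  proof (rule ccontr)
    assume close: "\<not> 3 \<le> hdist n c1 c2"
    have "hdist n c1 c2 \<noteq> 0" using hdist_eq_0_iff v c by blast
    then obtain i where i: "i < n" "c1 i \<noteq> c2 i"
      unfolding hdist_def by (metis (mono_tags, lifting) card.empty Collect_empty_eq)
    txt \<open>A word one step from c1 towards c2 lies in the unit balls of both.\<close>
    define y where "y = c1(i := c2 i)"
    have "y \<in> hvert n q" using v i by (auto simp: hvert_def y_def)
    moreover have "hdist n y c1 \<le> 1"
      unfolding y_def by (subst hdist_sym) (rule hdist_fun_upd_le)
    moreover have "hdist n y c2 \<le> card ({j. j < n \<and> c1 j \<noteq> c2 j} - {i})"
      by (rule hdist_le_card) (auto simp: y_def split: if_splits)
    then have "hdist n y c2 \<le> 1"
      using close i by (simp add: hdist_def)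
    ultimately show False using uniq c by blast
  qed
qed

lemma perfect1_code_card_ge:
  assumes P: "perfect1_code n q C"
  shows "q ^ n \<le> card C * (1 + n * (q - 1))"
proof -
  have C: "C \<subseteq> hvert n q" and finC: "finite C"
    using P finite_subset[OF _ finite_hvert] by (auto simp: perfect1_code_def)
  have "hvert n q \<subseteq> (\<Union>c\<in>C. {x \<in> hvert n q. hdist n x c \<le> 1})"
    using P unfolding perfect1_code_def by blast
  then have "card (hvert n q) \<le> card (\<Union>c\<in>C. {x \<in> hvert n q. hdist n x c \<le> 1})"
    by (intro card_mono) (auto simp: finC finite_hvert)
  then have "q ^ n \<le> card (\<Union>c\<in>C. {x \<in> hvert n q. hdist n x c \<le> 1})"
    by (simp add: card_hvert)
  also have "\<dots> \<le> (\<Sum>c\<in>C. card {x \<in> hvert n q. hdist n x c \<le> 1})"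
    by (rule card_UN_le[OF finC])
  also have "\<dots> \<le> (\<Sum>c\<in>C. 1 + n * (q - 1))"
    by (rule sum_mono) (use card_hball_le C in blast)
  finally show ?thesis by simp
qed

subsection \<open>Sections of a code along its last coordinate\<close>

text \<open>The condition x n = 0 makes the section a set of words of length n.\<close>

definition hsection :: "(nat \<Rightarrow> nat) set \<Rightarrow> nat \<Rightarrow> nat \<Rightarrow> (nat \<Rightarrow> nat) set" where
  "hsection C n j = {x. x n = 0 \<and> x(n := j) \<in> C}"

lemma hsection_subset_hvert:
  assumes "C \<subseteq> hvert (Suc n) q"
  shows "hsection C n j \<subseteq> hvert n q"
proof
  fix x assume x: "x \<in> hsection C n j"
  then have v: "x(n := j) \<in> hvert (Suc n) q" using assms by (auto simp: hsection_def)
  show "x \<in> hvert n q"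
    unfolding hvert_def
  proof (intro CollectI conjI allI impI)
    show "x i < q" if "i < n" for i
    proof -
      have "\<forall>i<Suc n. (x(n := j)) i < q" using v unfolding hvert_def by blast
      then have "(x(n := j)) i < q" using that less_SucI by blast
      then show ?thesis using that by simp
    qed
    show "x i = 0" if "n \<le> i" for i
      using v x that by (cases "i = n") (auto simp: hvert_def hsection_def)
  qed
qed

lemma card_hsection:
  assumes "C \<subseteq> hvert (Suc n) q"
  shows "card (hsection C n j) = card {c \<in> C. c n = j}"
proof -
  have "bij_betw (\<lambda>c. c(n := 0)) {c \<in> C. c n = j} (hsection C n j)"
  proof (rule bij_betw_byWitness[where f' = "\<lambda>x. x(n := j)"])
    show "\<forall>c\<in>{c \<in> C. c n = j}. (c(n := 0))(n := j) = c" by auto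
    show "\<forall>x\<in>hsection C n j. (x(n := j))(n := 0) = x"
      by (auto simp: hsection_def fun_upd_idem)
  qed (auto simp: hsection_def)
  then show ?thesis by (simp add: bij_betw_same_card)
qed

lemma card_eq_sum_card_hsection:
  assumes C: "C \<subseteq> hvert (Suc n) q"
  shows "card C = (\<Sum>j<q. card (hsection C n j))"
proof -
  have "C = (\<Union>j<q. {c \<in> C. c n = j})" using C by (auto simp: hvert_def)
  moreover have "card (\<Union>j<q. {c \<in> C. c n = j}) = (\<Sum>j<q. card {c \<in> C. c n = j})"
    using finite_subset[OF C finite_hvert] by (intro card_UN_disjoint) auto
  ultimately have "card C = (\<Sum>j<q. card {c \<in> C. c n = j})"
    by simp
  then show ?thesis using card_hsection[OF C] by simp
qed

lemma hdist_hsection: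
  assumes C: "hcode (Suc n) q d C"
    and x: "x \<in> hsection C n j" and y: "y \<in> hsection C n j'" and ne: "x \<noteq> y \<or> j \<noteq> j'"
  shows "d \<le> hdist n x y + (if j = j' then 0 else 1)"
proof -
  have "x(n := j) \<noteq> y(n := j')"
  proof
    assume eq: "x(n := j) = y(n := j')"
    have "x i = y i" for i
      using fun_cong[OF eq, of i] x y by (cases "i = n") (auto simp: hsection_def)
    with ne fun_cong[OF eq, of n] show False by auto
  qed
  then have "d \<le> hdist (Suc n) (x(n := j)) (y(n := j'))"
    using C x y by (auto simp: hcode_def hsection_def)
  then show ?thesis by (simp add: hdist_Suc_fun_upd)
qed

lemma hcode_hsection:
  assumes "hcode (Suc n) q d C"
  shows "hcode n q d (hsection C n j)"
  using assms hdist_hsection[OF assms] hsection_subset_hvert[of C n q j]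
  by (fastforce simp: hcode_def)

lemma hsection_disjoint:
  assumes "hcode (Suc n) q 2 C" "j \<noteq> j'"
  shows "hsection C n j \<inter> hsection C n j' = {}"
  using hdist_hsection[OF assms(1)] assms(2) by fastforce

text \<open>Each section obeys the Singleton bound q^(n-2), while together the q sections
  have at least q^(n-1) elements.\<close>

lemma hsections_mds_code:
  assumes C: "hcode (Suc n) q 3 C" and large: "q ^ (n - 1) \<le> card C" and n: "2 \<le> n"
  shows "\<forall>j<q. mds_code n q 3 (hsection C n j)"
    and "\<forall>j<q. \<forall>j'<q. j \<noteq> j' \<longrightarrow> hsection C n j \<inter> hsection C n j' = {}"
    and "mds_code n q 2 (\<Union>j<q. hsection C n j)"
proof -
  have Cv: "C \<subseteq> hvert (Suc n) q" using C by (simp add: hcode_def)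
  have le: "card (hsection C n j) \<le> q ^ (n - 2)" for j
    using hcode_card_le[OF hcode_hsection[OF C]] by simp
  have "(\<Sum>j<q. card (hsection C n j)) \<le> (\<Sum>j<q. q ^ (n - 2))"
    by (rule sum_mono) (rule le)
  moreover have "(\<Sum>j<q. q ^ (n - 2)) = q ^ (n - 1)"
  proof -
    have "n - 1 = Suc (n - 2)" using n by simp
    then show ?thesis by simp
  qed
  ultimately have sum: "(\<Sum>j<q. card (hsection C n j)) = (\<Sum>j<q. q ^ (n - 2))"
    using large card_eq_sum_card_hsection[OF Cv] by linarith
  have card: "card (hsection C n j) = q ^ (n - 2)" if "j < q" for j
    using sum_mono_inv[OF sum le] that by simp
  show "\<forall>j<q. mds_code n q 3 (hsection C n j)"
    using card hcode_hsection[OF C] by (simp add: mds_code_iff_hcode)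
  have C2: "hcode (Suc n) q 2 C" using hcode_mono[OF C] by simp
  show "\<forall>j<q. \<forall>j'<q. j \<noteq> j' \<longrightarrow> hsection C n j \<inter> hsection C n j' = {}"
    using hsection_disjoint[OF C2] by blast
  have "card (\<Union>j<q. hsection C n j) = (\<Sum>j<q. card (hsection C n j))"
    using hsection_disjoint[OF C2] finite_subset[OF hsection_subset_hvert[OF Cv] finite_hvert]
    by (intro card_UN_disjoint) auto
  also have "\<dots> = q ^ (n + 1 - 2)" using sum \<open>(\<Sum>j<q. q ^ (n - 2)) = q ^ (n - 1)\<close> by simp
  finally have "card (\<Union>j<q. hsection C n j) = q ^ (n + 1 - 2)" .
  moreover have "hcode n q 2 (\<Union>j<q. hsection C n j)"
    unfolding hcode_def
  proof (intro conjI ballI impI)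
    show "(\<Union>j<q. hsection C n j) \<subseteq> hvert n q"
      using hsection_subset_hvert[OF Cv] by blast
    fix x y assume "x \<in> (\<Union>j<q. hsection C n j)" "y \<in> (\<Union>j<q. hsection C n j)" "x \<noteq> y"
    then obtain j j' where "x \<in> hsection C n j" "y \<in> hsection C n j'" by blast
    with hdist_hsection[OF C this] \<open>x \<noteq> y\<close> show "2 \<le> hdist n x y"
      by (simp split: if_splits)
  qed
  ultimately show "mds_code n q 2 (\<Union>j<q. hsection C n j)"
    by (simp add: mds_code_iff_hcode)
qed

subsection \<open>Translating one coordinate modulo q\<close>

definition hshift :: "nat \<Rightarrow> nat \<Rightarrow> nat \<Rightarrow> (nat \<Rightarrow> nat) \<Rightarrow> nat \<Rightarrow> nat" where
  "hshift q i k x = x(i := (x i + k) mod q)"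

lemma mod_add_right_cancel_less:
  fixes a b k q :: nat
  assumes "a < q" "b < q" "(a + k) mod q = (b + k) mod q"
  shows "a = b"
proof -
  have "[a + k = b + k] (mod q)" using assms(3) by (simp add: cong_def)
  then have "[a = b] (mod q)" by (simp only: cong_add_rcancel_nat)
  then show ?thesis using assms(1,2) by (rule cong_less_modulus_unique_nat)
qed

lemma hshift_hvert:
  assumes "0 < q" "i < n" "x \<in> hvert n q"
  shows "hshift q i k x \<in> hvert n q"
  using assms by (auto simp: hvert_def hshift_def)

lemma hdist_hshift:
  assumes "i < n" "x \<in> hvert n q" "y \<in> hvert n q"
  shows "hdist n (hshift q i k x) (hshift q i k y) = hdist n x y"
proof -
  have "x i < q" "y i < q" using assms by (auto simp: hvert_def)
  then have "{j. j < n \<and> hshift q i k x j \<noteq> hshift q i k y j} = {j. j < n \<and> x j \<noteq> y j}"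
    by (auto simp: hshift_def dest: mod_add_right_cancel_less)
  then show ?thesis by (simp add: hdist_def)
qed

lemma inj_on_hshift:
  assumes "i < n"
  shows "inj_on (hshift q i k) (hvert n q)"
proof (rule inj_onI)
  fix x y assume "x \<in> hvert n q" "y \<in> hvert n q" "hshift q i k x = hshift q i k y"
  then show "x = y"
    using hdist_hshift[OF assms] hdist_eq_0_iff by (metis hdist_self)
qed

lemma mds_code_hshift:
  assumes C: "mds_code n q d C" and "0 < q" "i < n"
  shows "mds_code n q d (hshift q i k ` C)"
proof -
  have Cv: "C \<subseteq> hvert n q" using C by (simp add: mds_code_def)
  have "hcode n q d (hshift q i k ` C)"
    unfolding hcode_def
  proof (intro conjI ballI impI)
    show "hshift q i k ` C \<subseteq> hvert n q"
      using Cv hshift_hvert[OF assms(2,3)] by blast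
    fix x' y' assume "x' \<in> hshift q i k ` C" "y' \<in> hshift q i k ` C" "x' \<noteq> y'"
    then obtain x y where "x \<in> C" "y \<in> C" "x \<noteq> y" "x' = hshift q i k x" "y' = hshift q i k y"
      by blast
    moreover have "hdist n x' y' = hdist n x y"
      using hdist_hshift[OF assms(3) subsetD[OF Cv \<open>x \<in> C\<close>] subsetD[OF Cv \<open>y \<in> C\<close>]]
      by (simp add: \<open>x' = _\<close> \<open>y' = _\<close>)
    ultimately show "d \<le> hdist n x' y'"
      using C by (simp add: mds_code_def)
  qed
  moreover have "card (hshift q i k ` C) = card C"
    using card_image inj_on_subset[OF inj_on_hshift[OF assms(3)] Cv] by blast
  ultimately show ?thesis using C by (simp add: mds_code_iff_hcode)
qed

lemma hshift_eq_hshift_imp: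
  assumes "i < n" "x \<in> hvert n q" "y \<in> hvert n q" "k < q" "k' < q" "k \<noteq> k'"
    and eq: "hshift q i k x = hshift q i k' y"
  shows "x \<noteq> y" "hdist n x y \<le> 1"
proof -
  show "x \<noteq> y"
  proof
    assume "x = y"
    then have "(k + x i) mod q = (k' + x i) mod q"
      using fun_cong[OF eq, of i] by (simp add: hshift_def add.commute)
    then show False using assms(4-6) mod_add_right_cancel_less by blast
  qed
  have "x j = y j" if "j \<noteq> i" for j
    using fun_cong[OF eq, of j] that by (simp add: hshift_def)
  then show "hdist n x y \<le> 1"
    using hdist_le_card[of n x y "{i}"] by fastforce
qed

lemma hshifts_partition:
  assumes M: "hcode n q 2 M" "card M = q ^ (n - 1)" and q: "0 < q" and i: "i < n"
  shows "\<And>k k'. k < q \<Longrightarrow> k' < q \<Longrightarrow> k \<noteq> k' \<Longrightarrow> hshift q i k ` M \<inter> hshift q i k' ` M = {}"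
    and "(\<Union>k<q. hshift q i k ` M) = hvert n q"
proof -
  have Mv: "M \<subseteq> hvert n q" using M by (simp add: hcode_def)
  show disj: "hshift q i k ` M \<inter> hshift q i k' ` M = {}" if "k < q" "k' < q" "k \<noteq> k'" for k k'
  proof (rule ccontr)
    assume "hshift q i k ` M \<inter> hshift q i k' ` M \<noteq> {}"
    then obtain x y where xy: "x \<in> M" "y \<in> M" and eq: "hshift q i k x = hshift q i k' y"
      by auto
    have "x \<noteq> y" "hdist n x y \<le> 1"
      using hshift_eq_hshift_imp[OF i subsetD[OF Mv xy(1)] subsetD[OF Mv xy(2)] that eq] by auto
    then show False
      using M(1) xy unfolding hcode_def by fastforce
  qed
  have "card (\<Union>k<q. hshift q i k ` M) = (\<Sum>k<q. card (hshift q i k ` M))"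
    using disj finite_subset[OF Mv finite_hvert] by (intro card_UN_disjoint) auto
  also have "\<dots> = q * q ^ (n - 1)"
    using card_image[OF inj_on_subset[OF inj_on_hshift[OF i] Mv]] M(2) by simp
  also have "\<dots> = card (hvert n q)"
    using i by (simp add: card_hvert power_eq_if[of q n])
  finally show "(\<Union>k<q. hshift q i k ` M) = hvert n q"
    using Mv hshift_hvert[OF q i] by (intro card_subset_eq[OF finite_hvert]) auto
qed

lemma hshifts_partition_split_mds_code:
  assumes K: "\<forall>j<q. mds_code n q 3 (K j)"
    and K_disj: "\<forall>j<q. \<forall>j'<q. j \<noteq> j' \<longrightarrow> K j \<inter> K j' = {}"
    and M0: "mds_code n q 2 (\<Union>j<q. K j)" and q: "0 < q" and n: "0 < n"
  shows "\<exists>M. (\<forall>i<q. mds_code n q 2 (M i))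
         \<and> (\<forall>i<q. \<forall>j<q. i \<noteq> j \<longrightarrow> M i \<inter> M j = {})
         \<and> (\<Union>i<q. M i) = hvert n q
         \<and> (\<forall>i<q. \<exists>K'. (\<forall>j<q. mds_code n q 3 (K' j))
             \<and> (\<forall>j<q. \<forall>j'<q. j \<noteq> j' \<longrightarrow> K' j \<inter> K' j' = {})
             \<and> M i = (\<Union>j<q. K' j))"
proof -
  define sh where "sh k = hshift q (n - 1) k" for k
  have i: "n - 1 < n" using n by simp
  have M0': "hcode n q 2 (\<Union>j<q. K j)" "card (\<Union>j<q. K j) = q ^ (n - 1)"
    using M0 by (simp_all add: mds_code_iff_hcode)
  show ?thesis
  proof (rule exI[of _ "\<lambda>k. sh k ` (\<Union>j<q. K j)"], intro conjI allI impI)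
    show "mds_code n q 2 (sh k ` (\<Union>j<q. K j))" for k
      unfolding sh_def by (rule mds_code_hshift[OF M0 q i])
    show "sh k ` (\<Union>j<q. K j) \<inter> sh k' ` (\<Union>j<q. K j) = {}"
      if "k < q" "k' < q" "k \<noteq> k'" for k k'
      unfolding sh_def by (rule hshifts_partition(1)[OF M0' q i that])
    show "(\<Union>k<q. sh k ` (\<Union>j<q. K j)) = hvert n q"
      unfolding sh_def by (rule hshifts_partition(2)[OF M0' q i])
    show "\<exists>K'. (\<forall>j<q. mds_code n q 3 (K' j))
          \<and> (\<forall>j<q. \<forall>j'<q. j \<noteq> j' \<longrightarrow> K' j \<inter> K' j' = {})
          \<and> sh k ` (\<Union>j<q. K j) = (\<Union>j<q. K' j)" for k
    proof (rule exI[of _ "\<lambda>j. sh k ` K j"], intro conjI allI impI)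
      show "mds_code n q 3 (sh k ` K j)" if "j < q" for j
        unfolding sh_def using K that mds_code_hshift q i by blast
      have Kv: "K j \<subseteq> hvert n q" if "j < q" for j
        using K that by (simp add: mds_code_def)
      show "sh k ` K j \<inter> sh k ` K j' = {}" if "j < q" "j' < q" "j \<noteq> j'" for j j'
        using inj_on_image_Int[OF inj_on_hshift[OF i] Kv[OF that(1)] Kv[OF that(2)]] K_disj that
        by (simp add: sh_def)
      show "sh k ` (\<Union>j<q. K j) = (\<Union>j<q. sh k ` K j)"
        by (simp add: image_UN)
    qed
  qed
qed

theorem proposition8:
  fixes q :: nat
  assumes "q \<ge> 2"
    and "\<exists>C. perfect1_code (q + 1) q C"
  shows "\<exists>M :: nat \<Rightarrow> (nat \<Rightarrow> nat) set.
           (\<forall>i<q. mds_code q q 2 (M i))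
         \<and> (\<forall>i<q. \<forall>j<q. i \<noteq> j \<longrightarrow> M i \<inter> M j = {})
         \<and> (\<Union>i<q. M i) = hvert q q
         \<and> (\<forall>i<q. \<exists>K :: nat \<Rightarrow> (nat \<Rightarrow> nat) set.
               (\<forall>j<q. mds_code q q 3 (K j))
             \<and> (\<forall>j<q. \<forall>k<q. j \<noteq> k \<longrightarrow> K j \<inter> K k = {})
             \<and> M i = (\<Union>j<q. K j))"
proof -
  obtain C where P: "perfect1_code (Suc q) q C" using assms(2) by auto
  have "q ^ (q - 1) * q ^ 2 = q ^ Suc q"
    using assms(1) by (simp flip: power_add)
  also have "\<dots> \<le> card C * q ^ 2"
    using perfect1_code_card_ge[OF P] assms(1) by (simp add: power2_eq_square algebra_simps)
  finally have large: "q ^ (q - 1) \<le> card C" using assms(1) by simp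
  note sections = hsections_mds_code[OF perfect1_code_hcode[OF P] large assms(1)]
  show ?thesis
    using hshifts_partition_split_mds_code[OF sections] assms(1) by simp
qed

end
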